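(* Let $\Omega$ be finite, $M$ finite, and $s$ a proper scoring rule on the set $\mathcal P$ of probability functions on $\Omega$, with values in $[-\infty,M]^\Omega$. Let $H=\{p\in\hat{\mathcal P}: s(p)\text{ is finite}\}$ and let $\bar H$ be its closure. For any $p\in\bar H$, the limit of $\langle q,s(q)\rangle$ as $q$ tends to $p$ within $H$ exists (in $[-\infty,M]$). If $s(p)$ is finite, this limit equals $\langle p,s(p)\rangle$. Finally, if $(p_n)$ is a sequence in $H$ converging to $p\in\bar H$ such that $\lim_n s(p_n)=r$, then $\langle p,r\rangle=\lim_n\langle p_n,s(p_n)\rangle$.
   Context: $\hat{\mathcal P}$ is the set of functions $q:\Omega\to[0,1]$ with $\sum_\omega q(\omega)=1$, identified with probabilities via $q(\omega)=p(\{\omega\})$, with the Euclidean topology; $s(q)$ for $q\in\hat{\mathcal P}$ means $s$ of the corresponding probability. $[-\infty,M]^\Omega$ has the product of extended-real topologies. $\langle f,g\rangle=\sum_\omega f(\omega)\cdot g(\omega)$ for $f\in[0,1]^\Omega$, $g\in[-\infty,\infty)^\Omega$, with $a\cdot0=0\cdot a=0$ for all extended reals $a$; so $E_p g=\langle\hat p,g\rangle$ where $E_pg=\sum_{p(\{\omega\})\ne0}p(\{\omega\})g(\omega)$. $s$ is proper if $\langle p,s(p)\rangle\ge\langle p,s(q)\rangle$ for all $p,q\in\hat{\mathcal P}$. A score is finite if all its values are finite. *)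

theory Defs
  imports "HOL-Analysis.Analysis" "HOL-Library.Extended_Real"
begin

definition prob_simplex :: "('w::finite \<Rightarrow> real) set" where
  "prob_simplex = {q. (\<forall>w. 0 \<le> q w \<and> q w \<le> 1) \<and> (\<Sum>w\<in>UNIV. q w) = 1}"

text \<open>Pairing <f,g> = sum of f(w) * g(w), with 0 * a = 0 (built into ereal multiplication).\<close>
definition pairing :: "('w::finite \<Rightarrow> real) \<Rightarrow> ('w \<Rightarrow> ereal) \<Rightarrow> ereal" where
  "pairing f g = (\<Sum>w\<in>UNIV. ereal (f w) * g w)"

definition proper_score :: "(('w::finite \<Rightarrow> real) \<Rightarrow> ('w \<Rightarrow> ereal)) \<Rightarrow> bool" where
  "proper_score s \<longleftrightarrow>
     (\<forall>p\<in>prob_simplex. \<forall>q\<in>prob_simplex. pairing p (s p) \<ge> pairing p (s q))"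

definition finite_score_set :: "(('w::finite \<Rightarrow> real) \<Rightarrow> ('w \<Rightarrow> ereal)) \<Rightarrow> ('w \<Rightarrow> real) set" where
  "finite_score_set s = {p\<in>prob_simplex. \<forall>w. \<bar>s p w\<bar> \<noteq> \<infinity>}"

end

theory Submission
  imports Defs
begin

text \<open>
  Let \<open>G p = best_expected_score s p\<close> be the supremum of \<open>\<langle>p, s q\<rangle>\<close> over the forecasts \<open>q\<close> with finite score;
  properness says \<open>\<langle>q, s q\<rangle> = G q\<close> for those \<open>q\<close>. As \<open>q \<rightarrow> p\<close> within them,
  \<open>\<langle>q, s q\<rangle> \<ge> \<langle>q, s q'\<rangle> \<rightarrow> \<langle>p, s q'\<rangle>\<close> for every fixed \<open>q'\<close>, so the limit inferior is at least
  \<open>G p\<close>. Conversely, near \<open>p\<close> we have \<open>q \<ge> c p\<close> coordinatewise for any \<open>c < 1\<close>, and then the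
  deficit \<open>M - \<langle>q, s q\<rangle>\<close> is at least \<open>c (M - \<langle>p, s q\<rangle>) \<ge> c (M - G p)\<close>. Hence
  \<open>\<langle>q, s q\<rangle> \<rightarrow> G p\<close>. Along a sequence \<open>p\<^sub>n \<rightarrow> p\<close> with \<open>s p\<^sub>n \<rightarrow> r\<close>, the bounds
  \<open>\<langle>p, s p\<^sub>n\<rangle> \<le> G p\<close> and \<open>\<langle>p\<^sub>n, s p\<^sub>n\<rangle> \<rightarrow> G p\<close> pass to the limit and squeeze \<open>\<langle>p, r\<rangle> = G p\<close>.
\<close>

lemma tendsto_fun_apply:
  fixes f :: "'a \<Rightarrow> 'b \<Rightarrow> 'c::topological_space"
  assumes "(f \<longlongrightarrow> l) F"
  shows "((\<lambda>x. f x i) \<longlongrightarrow> l i) F"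
  by (rule continuous_on_tendsto_compose[OF continuous_on_product_coordinates assms]) auto

lemma tendsto_sum_ereal_not_PInf:
  fixes f :: "'i \<Rightarrow> 'a \<Rightarrow> ereal"
  assumes "\<And>i. i \<in> I \<Longrightarrow> (f i \<longlongrightarrow> a i) F" and "\<And>i. i \<in> I \<Longrightarrow> a i \<noteq> \<infinity>"
  shows "((\<lambda>x. \<Sum>i\<in>I. f i x) \<longlongrightarrow> (\<Sum>i\<in>I. a i)) F"
  using assms
proof (induction I rule: infinite_finite_induct)
  case (insert i I)
  have "(\<Sum>j\<in>I. a j) \<noteq> \<infinity>"
    using insert.prems(2) by (simp add: sum_Pinfty insert.hyps(1))
  then show ?case
    using insert by (simp add: tendsto_add_ereal_general)
qed simp_all

lemma closed_prob_simplex: "closed (prob_simplex :: ('w::finite \<Rightarrow> real) set)"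
proof -
  have "closed {q::'w \<Rightarrow> real. 0 \<le> q w \<and> q w \<le> 1}" for w
    by (intro closed_Collect_conj closed_Collect_le continuous_intros continuous_on_product_coordinates)
  then have "closed {q::'w \<Rightarrow> real. \<forall>w. 0 \<le> q w \<and> q w \<le> 1}"
    by (rule closed_Collect_all)
  moreover have "closed {q::'w \<Rightarrow> real. (\<Sum>w\<in>UNIV. q w) = 1}"
    by (intro closed_Collect_eq continuous_intros continuous_on_product_coordinates)
  ultimately show ?thesis
    unfolding prob_simplex_def by (rule closed_Collect_conj)
qed

lemma pairing_ereal: "pairing f (\<lambda>w. ereal (g w)) = ereal (\<Sum>w\<in>UNIV. f w * g w)"
  by (simp add: pairing_def)

lemma pairing_mono:
  assumes "\<And>w. 0 \<le> f w" and "\<And>w. g w \<le> h w"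
  shows "pairing f g \<le> pairing f h"
  unfolding pairing_def using assms by (intro sum_mono ereal_mult_left_mono) auto

lemma pairing_cong_support:
  assumes "\<And>w. f w \<noteq> 0 \<Longrightarrow> g w = h w"
  shows "pairing f g = pairing f h"
  unfolding pairing_def
proof (rule sum.cong)
  show "ereal (f w) * g w = ereal (f w) * h w" for w
    using assms[of w] by (cases "f w = 0") (auto simp: zero_ereal_def[symmetric])
qed simp

lemma pairing_le_const:
  assumes "p \<in> prob_simplex" and "\<And>w. g w \<le> ereal M"
  shows "pairing p g \<le> ereal M"
proof -
  have "pairing p g \<le> pairing p (\<lambda>_. ereal M)"
    using assms unfolding prob_simplex_def by (intro pairing_mono) auto
  also have "\<dots> = ereal M"
    using assms(1) unfolding pairing_ereal prob_simplex_def by (simp flip: sum_distrib_right)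
  finally show ?thesis .
qed

lemma tendsto_pairing:
  assumes "\<And>w. ((\<lambda>x. f x w) \<longlongrightarrow> p w) F" and "\<And>w. ((\<lambda>x. g x w) \<longlongrightarrow> r w) F"
    and "\<And>w. 0 \<le> p w" and "\<And>w. r w \<noteq> \<infinity>" and "\<And>w. p w = 0 \<Longrightarrow> \<bar>r w\<bar> \<noteq> \<infinity>"
  shows "((\<lambda>x. pairing (f x) (g x)) \<longlongrightarrow> pairing p r) F"
  unfolding pairing_def
proof (rule tendsto_sum_ereal_not_PInf)
  fix w
  show "((\<lambda>x. ereal (f x w) * g x w) \<longlongrightarrow> ereal (p w) * r w) F"
    using assms by (intro tendsto_mult_ereal) auto
  show "ereal (p w) * r w \<noteq> \<infinity>"
    using assms(3-5)[of w] by (cases "r w") auto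
qed

lemma finite_score_set_subset: "finite_score_set s \<subseteq> prob_simplex"
  unfolding finite_score_set_def by auto

lemma closure_finite_score_set_subset: "closure (finite_score_set s) \<subseteq> prob_simplex"
  by (rule closure_minimal[OF finite_score_set_subset closed_prob_simplex])

lemma finite_score_set_real:
  assumes "q \<in> finite_score_set s"
  shows "s q = (\<lambda>w. ereal (real_of_ereal (s q w)))"
  using assms unfolding finite_score_set_def by (simp add: ereal_real')

lemma scaled_deficit_le:
  fixes p x S :: "'w::finite \<Rightarrow> real"
  assumes "(\<Sum>w\<in>UNIV. p w) = 1" and "(\<Sum>w\<in>UNIV. x w) = 1"
    and "\<And>w. c * p w \<le> x w" and "\<And>w. S w \<le> M"
  shows "c * (M - (\<Sum>w\<in>UNIV. p w * S w)) \<le> M - (\<Sum>w\<in>UNIV. x w * S w)"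
proof -
  have deficit: "M - (\<Sum>w\<in>UNIV. q w * S w) = (\<Sum>w\<in>UNIV. q w * (M - S w))"
    if "(\<Sum>w\<in>UNIV. q w) = 1" for q :: "'w \<Rightarrow> real"
    using that by (simp add: right_diff_distrib sum_subtractf flip: sum_distrib_right)
  have "(\<Sum>w\<in>UNIV. c * p w * (M - S w)) \<le> (\<Sum>w\<in>UNIV. x w * (M - S w))"
    using assms(3,4) by (intro sum_mono mult_right_mono) auto
  then show ?thesis
    by (simp add: deficit assms(1,2) sum_distrib_left mult.assoc)
qed

lemma eventually_nhds_scaled_less:
  fixes p :: "'w::finite \<Rightarrow> real"
  assumes "c < 1"
  shows "\<forall>\<^sub>F x in nhds p. \<forall>w. 0 < p w \<longrightarrow> c * p w < x w"
proof (rule eventually_all_finite)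
  fix w
  have "((\<lambda>x. x w) \<longlongrightarrow> p w) (nhds p)"
    by (rule tendsto_fun_apply[OF filterlim_ident])
  then show "\<forall>\<^sub>F x in nhds p. 0 < p w \<longrightarrow> c * p w < x w"
    using assms by (cases "0 < p w") (auto elim: order_tendstoD(1))
qed

definition best_expected_score :: "(('w::finite \<Rightarrow> real) \<Rightarrow> ('w \<Rightarrow> ereal)) \<Rightarrow> ('w \<Rightarrow> real) \<Rightarrow> ereal" where
  "best_expected_score s p = (SUP q\<in>finite_score_set s. pairing p (s q))"

lemma best_expected_score_le_bound:
  assumes "\<forall>p\<in>prob_simplex. \<forall>w. s p w \<le> ereal M" and "p \<in> prob_simplex"
  shows "best_expected_score s p \<le> ereal M"
  unfolding best_expected_score_def
  using assms finite_score_set_subset by (intro SUP_least pairing_le_const) auto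

lemma best_expected_score_neq_MInf:
  assumes "q \<in> finite_score_set s"
  shows "best_expected_score s p \<noteq> -\<infinity>"
proof -
  have "pairing p (s q) \<le> best_expected_score s p"
    unfolding best_expected_score_def using assms by (rule SUP_upper)
  moreover have "pairing p (s q) \<noteq> -\<infinity>"
    by (subst finite_score_set_real[OF assms]) (simp add: pairing_ereal)
  ultimately show ?thesis
    by auto
qed

lemma best_expected_score_self:
  assumes "proper_score s" and "p \<in> finite_score_set s"
  shows "best_expected_score s p = pairing p (s p)"
  unfolding best_expected_score_def
proof (rule antisym)
  show "(SUP q\<in>finite_score_set s. pairing p (s q)) \<le> pairing p (s p)"
    using assms finite_score_set_subset unfolding proper_score_def by (intro SUP_least) blast
qed (use assms(2) in \<open>rule SUP_upper\<close>)

lemma eventually_less_pairing_self: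
  assumes proper: "proper_score s" and "p \<in> prob_simplex"
    and "a < best_expected_score s p"
  shows "\<forall>\<^sub>F q in inf (nhds p) (principal (finite_score_set s)). a < pairing q (s q)"
proof -
  obtain q' where q': "q' \<in> finite_score_set s" and "a < pairing p (s q')"
    using assms(3) unfolding best_expected_score_def by (auto simp: less_SUP_iff)
  moreover have "((\<lambda>q. pairing q (s q')) \<longlongrightarrow> pairing p (s q')) (nhds p)"
    using assms(2) unfolding prob_simplex_def
    by (subst (1 2) finite_score_set_real[OF q'])
      (intro tendsto_pairing tendsto_fun_apply[OF filterlim_ident] tendsto_const; simp)
  ultimately have "\<forall>\<^sub>F q in nhds p. a < pairing q (s q')"
    by (simp add: order_tendstoD(1))
  moreover have "pairing q (s q') \<le> pairing q (s q)" if "q \<in> finite_score_set s" for q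
    using proper q' that finite_score_set_subset unfolding proper_score_def by blast
  ultimately show ?thesis
    unfolding eventually_inf_principal by (auto elim!: eventually_mono intro: less_le_trans)
qed

lemma pairing_self_le_scaled:
  assumes bounded: "\<forall>p\<in>prob_simplex. \<forall>w. s p w \<le> ereal M"
    and q: "q \<in> finite_score_set s" and p: "p \<in> prob_simplex"
    and "0 \<le> c" and "\<And>w. c * p w \<le> q w" and "pairing p (s q) \<le> ereal L"
  shows "pairing q (s q) \<le> ereal (M - c * (M - L))"
proof -
  define S where "S w = real_of_ereal (s q w)" for w
  have s_q: "s q = (\<lambda>w. ereal (S w))"
    unfolding S_def using q by (rule finite_score_set_real)
  have "q \<in> prob_simplex"
    using q finite_score_set_subset by blast
  then have "S w \<le> M" for w
    using bounded s_q by (metis ereal_less_eq(3))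
  then have "c * (M - (\<Sum>w\<in>UNIV. p w * S w)) \<le> M - (\<Sum>w\<in>UNIV. q w * S w)"
    using p \<open>q \<in> prob_simplex\<close> assms(5) unfolding prob_simplex_def by (intro scaled_deficit_le) auto
  moreover have "(\<Sum>w\<in>UNIV. p w * S w) \<le> L"
    using assms(6) by (simp add: s_q pairing_ereal)
  ultimately have "(\<Sum>w\<in>UNIV. q w * S w) \<le> M - c * (M - L)"
    using \<open>0 \<le> c\<close> by (smt (verit) mult_left_mono)
  then show ?thesis
    by (simp add: s_q pairing_ereal)
qed

lemma eventually_pairing_self_less:
  assumes bounded: "\<forall>p\<in>prob_simplex. \<forall>w. s p w \<le> ereal M"
    and p: "p \<in> prob_simplex" and "finite_score_set s \<noteq> {}"
    and "best_expected_score s p < a"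
  shows "\<forall>\<^sub>F q in inf (nhds p) (principal (finite_score_set s)). pairing q (s q) < a"
proof -
  obtain L where L: "best_expected_score s p = ereal L" and "L \<le> M"
    using best_expected_score_le_bound[OF bounded p] best_expected_score_neq_MInf assms(3)
    by (cases "best_expected_score s p") auto
  obtain b where "L < b" and "ereal b \<le> a"
    using assms(4) L ereal_dense2 by (metis less_ereal.simps(1) less_imp_le)
  define c where "c = (M - L) / ((M - L) + (b - L))"
  have "0 \<le> c" and "c < 1" and "M - c * (M - L) < b"
    using \<open>L \<le> M\<close> \<open>L < b\<close> mult_pos_pos[of "b - L" "b - L"]
    unfolding c_def by (auto simp: field_simps)
  have "pairing q (s q) < a"
    if scaled: "\<forall>w. 0 < p w \<longrightarrow> c * p w < q w" and q: "q \<in> finite_score_set s" for q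
  proof -
    have "c * p w \<le> q w" for w
      using scaled q finite_score_set_subset p \<open>0 \<le> c\<close> unfolding prob_simplex_def
      by (cases "p w = 0") (auto simp: less_le)
    moreover have "pairing p (s q) \<le> ereal L"
      using q unfolding L[symmetric] best_expected_score_def by (rule SUP_upper)
    ultimately have "pairing q (s q) \<le> ereal (M - c * (M - L))"
      by (rule pairing_self_le_scaled[OF bounded q p \<open>0 \<le> c\<close>])
    also have "\<dots> < ereal b"
      using \<open>M - c * (M - L) < b\<close> by simp
    also have "\<dots> \<le> a"
      by fact
    finally show ?thesis .
  qed
  then show ?thesis
    using eventually_nhds_scaled_less[OF \<open>c < 1\<close>, of p]
    unfolding eventually_inf_principal by (auto elim!: eventually_mono)
qed

lemma tendsto_pairing_self_best_expected_score:
  assumes bounded: "\<forall>p\<in>prob_simplex. \<forall>w. s p w \<le> ereal M"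
    and proper: "proper_score s"
    and "p \<in> prob_simplex" and "finite_score_set s \<noteq> {}"
  shows "((\<lambda>q. pairing q (s q)) \<longlongrightarrow> best_expected_score s p)
           (inf (nhds p) (principal (finite_score_set s)))"
  using eventually_less_pairing_self[OF proper assms(3)]
    eventually_pairing_self_less[OF bounded assms(3,4)]
  by (rule order_tendstoI)

lemma tendsto_pairing_self_sequentially:
  assumes bounded: "\<forall>p\<in>prob_simplex. \<forall>w. s p w \<le> ereal M"
    and proper: "proper_score s"
    and pn: "\<And>n. pn n \<in> finite_score_set s" and "pn \<longlonglongrightarrow> p" and p: "p \<in> prob_simplex"
  shows "(\<lambda>n. pairing (pn n) (s (pn n))) \<longlonglongrightarrow> best_expected_score s p"
proof -
  have "((\<lambda>q. pairing q (s q)) \<longlongrightarrow> best_expected_score s p)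
          (inf (nhds p) (principal (finite_score_set s)))"
    using pn by (intro tendsto_pairing_self_best_expected_score[OF bounded proper p]) blast
  moreover have "filterlim pn (inf (nhds p) (principal (finite_score_set s))) sequentially"
    using \<open>pn \<longlonglongrightarrow> p\<close> pn by (simp add: filterlim_inf filterlim_principal)
  ultimately show ?thesis
    by (rule filterlim_compose)
qed

lemma pairing_limit_score_eq:
  assumes bounded: "\<forall>p\<in>prob_simplex. \<forall>w. s p w \<le> ereal M"
    and proper: "proper_score s"
    and pn: "\<And>n. pn n \<in> finite_score_set s" and "pn \<longlonglongrightarrow> p" and p: "p \<in> prob_simplex"
    and "(\<lambda>n. s (pn n)) \<longlonglongrightarrow> r"
  shows "pairing p r = best_expected_score s p"
proof -
  have s_le: "s (pn n) w \<le> ereal M" for n w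
    using bounded pn finite_score_set_subset by blast
  have r_le: "r w \<le> ereal M" for w
    by (rule tendsto_upperbound[OF tendsto_fun_apply[OF \<open>(\<lambda>n. s (pn n)) \<longlonglongrightarrow> r\<close>]])
      (simp_all add: s_le)
  \<comment> \<open>Off the support of \<open>p\<close>, replace the scores by their bound \<open>M\<close>: this leaves the pairing
    with \<open>p\<close> unchanged, can only increase the pairing with \<open>pn n\<close>, and removes the \<open>0 \<cdot> -\<infinity>\<close>
    discontinuity of the pairing at the limit.\<close>
  define h where "h n w = (if p w = 0 then ereal M else s (pn n) w)" for n w
  define r' where "r' w = (if p w = 0 then ereal M else r w)" for w
  have p_r': "pairing p r' = pairing p r"
    unfolding r'_def by (rule pairing_cong_support) simp
  have "(\<lambda>n. h n w) \<longlonglongrightarrow> r' w" for w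
    unfolding h_def r'_def
    using tendsto_fun_apply[OF \<open>(\<lambda>n. s (pn n)) \<longlonglongrightarrow> r\<close>] by simp
  moreover have "r' w \<noteq> \<infinity>" and "p w = 0 \<Longrightarrow> \<bar>r' w\<bar> \<noteq> \<infinity>" for w
    using r_le[of w] unfolding r'_def by auto
  moreover have "0 \<le> p w" for w
    using p unfolding prob_simplex_def by simp
  ultimately have lim_p: "(\<lambda>n. pairing p (h n)) \<longlonglongrightarrow> pairing p r"
    and lim_pn: "(\<lambda>n. pairing (pn n) (h n)) \<longlonglongrightarrow> pairing p r"
    unfolding p_r'[symmetric]
    by (intro tendsto_pairing tendsto_const tendsto_fun_apply[OF \<open>pn \<longlonglongrightarrow> p\<close>]; simp)+
  have "pairing p (h n) = pairing p (s (pn n))" for n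
    unfolding h_def by (rule pairing_cong_support) simp
  then have "pairing p (h n) \<le> best_expected_score s p" for n
    unfolding best_expected_score_def using SUP_upper[OF pn] by simp
  then have "pairing p r \<le> best_expected_score s p"
    by (intro tendsto_upperbound[OF lim_p]) simp_all
  moreover have "pairing (pn n) (s (pn n)) \<le> pairing (pn n) (h n)" for n
    using pn finite_score_set_subset s_le unfolding h_def prob_simplex_def
    by (intro pairing_mono) auto
  then have "best_expected_score s p \<le> pairing p r"
    by (intro tendsto_le[OF _ lim_pn tendsto_pairing_self_sequentially[OF assms(1-5)]]) simp_all
  ultimately show ?thesis
    by simp
qed

theorem lemma3:
  fixes s :: "('w::finite \<Rightarrow> real) \<Rightarrow> ('w \<Rightarrow> ereal)" and M :: real
  assumes bounded: "\<forall>p\<in>prob_simplex. \<forall>w. s p w \<le> ereal M"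
    and proper: "proper_score s"
  shows "(\<forall>p\<in>closure (finite_score_set s).
            \<exists>L. L \<le> ereal M \<and>
                ((\<lambda>q. pairing q (s q)) \<longlongrightarrow> L) (inf (nhds p) (principal (finite_score_set s))))
       \<and> (\<forall>p\<in>finite_score_set s.
            ((\<lambda>q. pairing q (s q)) \<longlongrightarrow> pairing p (s p)) (inf (nhds p) (principal (finite_score_set s))))
       \<and> (\<forall>(pn :: nat \<Rightarrow> ('w \<Rightarrow> real)) p r. (\<forall>n. pn n \<in> finite_score_set s) \<longrightarrow>
            pn \<longlonglongrightarrow> p \<longrightarrow> p \<in> closure (finite_score_set s) \<longrightarrow> (\<lambda>n. s (pn n)) \<longlonglongrightarrow> r \<longrightarrow>
            (\<lambda>n. pairing (pn n) (s (pn n))) \<longlonglongrightarrow> pairing p r)"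
proof (intro conjI ballI allI impI)
  fix p
  assume p: "p \<in> closure (finite_score_set s)"
  then have "p \<in> prob_simplex" and "finite_score_set s \<noteq> {}"
    using closure_finite_score_set_subset by auto
  then have "best_expected_score s p \<le> ereal M"
    using best_expected_score_le_bound[OF bounded] by blast
  moreover have "((\<lambda>q. pairing q (s q)) \<longlongrightarrow> best_expected_score s p)
                   (inf (nhds p) (principal (finite_score_set s)))"
    using \<open>p \<in> prob_simplex\<close> \<open>finite_score_set s \<noteq> {}\<close>
    by (rule tendsto_pairing_self_best_expected_score[OF bounded proper])
  ultimately show "\<exists>L. L \<le> ereal M \<and>
      ((\<lambda>q. pairing q (s q)) \<longlongrightarrow> L) (inf (nhds p) (principal (finite_score_set s)))"
    by auto
next
  fix p
  assume p: "p \<in> finite_score_set s"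
  then have "((\<lambda>q. pairing q (s q)) \<longlongrightarrow> best_expected_score s p)
               (inf (nhds p) (principal (finite_score_set s)))"
    using finite_score_set_subset by (intro tendsto_pairing_self_best_expected_score[OF bounded proper]) auto
  then show "((\<lambda>q. pairing q (s q)) \<longlongrightarrow> pairing p (s p)) (inf (nhds p) (principal (finite_score_set s)))"
    by (simp add: best_expected_score_self[OF proper p])
next
  fix pn p r
  assume pn: "\<forall>n. pn n \<in> finite_score_set s" and "pn \<longlonglongrightarrow> p"
    and "p \<in> closure (finite_score_set s)" and "(\<lambda>n. s (pn n)) \<longlonglongrightarrow> r"
  then have "p \<in> prob_simplex"
    using closure_finite_score_set_subset by blast
  note hyps = pn[rule_format] \<open>pn \<longlonglongrightarrow> p\<close> this
  have "pairing p r = best_expected_score s p"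
    using hyps \<open>(\<lambda>n. s (pn n)) \<longlonglongrightarrow> r\<close> by (rule pairing_limit_score_eq[OF bounded proper])
  with tendsto_pairing_self_sequentially[OF bounded proper hyps]
  show "(\<lambda>n. pairing (pn n) (s (pn n))) \<longlonglongrightarrow> pairing p r"
    by simp
qed

end
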